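(* Let $X$ be a Banach space and let $f\colon B_{X^*}\to\mathbb F$ be a Borel, $S_{\mathbb F}$-homogeneous, strongly affine function. Then for every Radon probability measure $\mu$ on $B_{X^*}$ there exists a sequence $(x_n)\subset X$ with $\|x_n\|\le\|f\|_\infty$ for all $n$ such that $t(x_n)\to f(t)$ for $\mu$-almost every $t\in B_{X^*}$.
   Context: $\mathbb F\in\{\mathbb R,\mathbb C\}$, $S_{\mathbb F}=\{|\alpha|=1\}$. $B_{X^*}$ carries the weak$^*$ topology. $f$ is $S_{\mathbb F}$-homogeneous if $f(\alpha t)=\alpha f(t)$ for $\alpha\in S_{\mathbb F}$. A real function $g$ on a compact convex set $K$ is strongly affine if it is bounded, Borel, and $\int_K g\,d\nu=g(r(\nu))$ for every Radon probability $\nu$ on $K$, where $r(\nu)$ is the barycenter of $\nu$; a complex function is strongly affine if its real and imaginary parts are. *)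

theory Defs
  imports "HOL-Analysis.Analysis" "HOL-Probability.Probability"
begin

text \<open>Scalar field F: a type 'f that is a real normed field and a finite-dimensional
  real Euclidean space (i.e. R or C up to isomorphism). The F-Banach space X is a real
  Banach space 'a together with a scalar multiplication sc by 'f extending scaleR.\<close>

definition scalar_structure :: "('f::{real_normed_field,euclidean_space} \<Rightarrow> 'a::banach \<Rightarrow> 'a) \<Rightarrow> bool" where
  "scalar_structure sc \<longleftrightarrow>
     (\<forall>a b x. sc (a * b) x = sc a (sc b x)) \<and>
     (\<forall>a b x. sc (a + b) x = sc a x + sc b x) \<and>
     (\<forall>a x y. sc a (x + y) = sc a x + sc a y) \<and>
     (\<forall>r x. sc (of_real r) x = r *\<^sub>R x) \<and>
     (\<forall>a x. norm (sc a x) = norm a * norm x)"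

text \<open>Closed unit ball of the dual X^*, as a subset of the function space 'a => 'f,
  which carries the product topology (= weak* topology on functionals).\<close>

definition dual_ball :: "('f::{real_normed_field,euclidean_space} \<Rightarrow> 'a::banach \<Rightarrow> 'a) \<Rightarrow> ('a \<Rightarrow> 'f) set" where
  "dual_ball sc = {t. (\<forall>x y. t (x + y) = t x + t y) \<and> (\<forall>a x. t (sc a x) = a * t x)
                     \<and> (\<forall>x. norm (t x) \<le> norm x)}"

definition radon_prob :: "'b::topological_space set \<Rightarrow> 'b measure \<Rightarrow> bool" where
  "radon_prob K \<nu> \<longleftrightarrow> sets \<nu> = sets (restrict_space borel K) \<and> space \<nu> = K \<and>
     prob_space \<nu> \<and>
     (\<forall>A\<in>sets \<nu>. emeasure \<nu> A = (SUP C\<in>{C. compact C \<and> C \<subseteq> A}. emeasure \<nu> C))"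

text \<open>Barycenter of a measure on the dual ball: the point r of K whose evaluation at every
  x (the weak*-continuous linear functionals) equals the integral of evaluations.\<close>

definition is_barycenter :: "('a \<Rightarrow> 'f::{real_normed_field,euclidean_space}) set \<Rightarrow> ('a \<Rightarrow> 'f) measure \<Rightarrow> ('a \<Rightarrow> 'f) \<Rightarrow> bool" where
  "is_barycenter K \<nu> r \<longleftrightarrow> r \<in> K \<and>
     (\<forall>x. integrable \<nu> (\<lambda>t. t x) \<and> r x = (\<integral>t. t x \<partial>\<nu>))"

definition strongly_affine_real :: "('a \<Rightarrow> 'f::{real_normed_field,euclidean_space}) set \<Rightarrow> (('a \<Rightarrow> 'f) \<Rightarrow> real) \<Rightarrow> bool" where
  "strongly_affine_real K g \<longleftrightarrow>
     (\<exists>M. \<forall>t\<in>K. \<bar>g t\<bar> \<le> M) \<and>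
     g \<in> borel_measurable (restrict_space borel K) \<and>
     (\<forall>\<nu> r. radon_prob K \<nu> \<longrightarrow> is_barycenter K \<nu> r \<longrightarrow> (\<integral>t. g t \<partial>\<nu>) = g r)"

text \<open>An F-valued function is strongly affine iff its real coordinates (real and imaginary
  parts in the complex case) are.\<close>

definition strongly_affine :: "('a \<Rightarrow> 'f::{real_normed_field,euclidean_space}) set \<Rightarrow> (('a \<Rightarrow> 'f) \<Rightarrow> 'f) \<Rightarrow> bool" where
  "strongly_affine K f \<longleftrightarrow> (\<forall>b\<in>Basis. strongly_affine_real K (\<lambda>t. f t \<bullet> b))"

definition S_homogeneous :: "('a \<Rightarrow> 'f::{real_normed_field,euclidean_space}) set \<Rightarrow> (('a \<Rightarrow> 'f) \<Rightarrow> 'f) \<Rightarrow> bool" where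
  "S_homogeneous K f \<longleftrightarrow> (\<forall>\<alpha>. norm \<alpha> = 1 \<longrightarrow> (\<forall>t\<in>K. f (\<lambda>x. \<alpha> * t x) = \<alpha> * f t))"

end

theory Submission
  imports Defs
begin

text \<open>
  Write c for the supremum of the norm of f and Q(x) for the integral with respect to mu of the
  squared distance between f(t) and t(x), where x ranges over the ball of radius c. The key inequality: for every bounded Borel h, the integral
  of the inner product of h(t) and f(t) is at most the supremum, over norm x at most c, of the
  integral of the inner product of h(t) and t(x). To prove it, split the inner product with h(t)
  into nonnegative weights along the finitely many unit vectors b and -b, b in the basis of the
  scalar field. Each weighted copy of mu is again Radon with a barycenter in the dual ball, so
  strong affinity moves f inside the integral and homogeneity rotates each direction to 1.
  A convex combination of the barycenters then reduces everything to a single functional s, for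
  which Re f(s) is at most c times the norm of s, a bound almost attained by Re s(x) with norm x
  at most c. Applied to h = f - t(x0), the inequality gives a direction along which Q decreases
  unless Q(x0) is already small, so the infimum of Q is 0. Choosing Q(x_n) below 2^-n makes the
  series of squared distances converge almost everywhere.
\<close>

section \<open>Radon probability measures on sets of functionals\<close>

lemma compact_in_sets_restrict_borel:
  fixes K C :: "('a \<Rightarrow> 'b::metric_space) set"
  assumes "compact C" and "C \<subseteq> K"
  shows "C \<in> sets (restrict_space borel K)"
proof -
  have "Hausdorff_space (euclidean :: ('a \<Rightarrow> 'b) topology)"
    using Hausdorff_space_product_topology[of "\<lambda>_. euclidean :: 'b topology" UNIV]
    by (simp add: euclidean_product_topology)
  then have "closed C"
    using compactin_imp_closedin assms(1) unfolding closed_closedin by (metis compactin_euclidean_iff)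
  then show ?thesis
    unfolding sets_restrict_space using assms(2) by (intro image_eqI[of _ _ C] borel_closed) auto
qed

lemma radon_probD:
  assumes "radon_prob K \<nu>"
  shows "sets \<nu> = sets (restrict_space borel K)" and "space \<nu> = K" and "prob_space \<nu>"
    and "A \<in> sets \<nu> \<Longrightarrow> emeasure \<nu> A = (SUP C\<in>{C. compact C \<and> C \<subseteq> A}. emeasure \<nu> C)"
  using assms unfolding radon_prob_def by auto

lemma radon_prob_integrable_bounded:
  fixes g :: "'b::topological_space \<Rightarrow> 'c::{banach, second_countable_topology}"
  assumes \<nu>: "radon_prob K \<nu>" and g: "g \<in> borel_measurable (restrict_space borel K)"
    and bounded: "\<And>t. t \<in> K \<Longrightarrow> norm (g t) \<le> B"
  shows "integrable \<nu> g"
proof -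
  interpret prob_space \<nu> using radon_probD(3)[OF \<nu>] .
  show ?thesis
    by (rule integrable_const_bound[where B=B])
       (use g bounded radon_probD(2)[OF \<nu>] in \<open>auto simp: measurable_cong_sets[OF radon_probD(1)[OF \<nu>] refl]\<close>)
qed

lemma radon_prob_inner_approx:
  fixes K :: "('a \<Rightarrow> 'b::metric_space) set"
  assumes \<mu>: "radon_prob K \<mu>" and A: "A \<in> sets \<mu>" and "0 < \<delta>"
  obtains C where "compact C" "C \<subseteq> A" "C \<in> sets \<mu>" "measure \<mu> (A - C) < \<delta>"
proof (cases "measure \<mu> A < \<delta>")
  case True
  then show ?thesis by (intro that[of "{}"]) auto
next
  case False
  interpret prob_space \<mu> using radon_probD(3)[OF \<mu>] .
  have "ennreal (measure \<mu> A - \<delta>) < emeasure \<mu> A"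
    using False \<open>0 < \<delta>\<close> by (simp add: emeasure_eq_measure ennreal_less_iff)
  then obtain C where C: "compact C" "C \<subseteq> A" "ennreal (measure \<mu> A - \<delta>) < emeasure \<mu> C"
    unfolding radon_probD(4)[OF \<mu> A] less_SUP_iff by blast
  have "A \<subseteq> K" using sets.sets_into_space[OF A] radon_probD(2)[OF \<mu>] by simp
  then have Cs: "C \<in> sets \<mu>"
    using C compact_in_sets_restrict_borel radon_probD(1)[OF \<mu>] by blast
  have "measure \<mu> A - \<delta> < measure \<mu> C"
    using C(3) False \<open>0 < \<delta>\<close> by (simp add: emeasure_eq_measure ennreal_less_iff)
  then have "measure \<mu> (A - C) < \<delta>"
    using finite_measure_Diff[OF A Cs C(2)] by linarith
  with C(1,2) Cs show ?thesis by (rule that)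
qed

lemma radon_prob_dominated:
  fixes K :: "('a \<Rightarrow> 'b::metric_space) set"
  assumes \<mu>: "radon_prob K \<mu>" and \<nu>: "prob_space \<nu>" and sets: "sets \<nu> = sets \<mu>" and "0 \<le> B"
    and dominated: "\<And>X. X \<in> sets \<mu> \<Longrightarrow> emeasure \<nu> X \<le> ennreal B * emeasure \<mu> X"
  shows "radon_prob K \<nu>"
  unfolding radon_prob_def
proof (intro conjI ballI)
  show "sets \<nu> = sets (restrict_space borel K)" using sets radon_probD(1)[OF \<mu>] by simp
  then show "space \<nu> = K" using sets_eq_imp_space_eq[of \<nu> "restrict_space borel K"]
    by (simp add: space_restrict_space)
  show "prob_space \<nu>" by (fact \<nu>)
  fix A assume A: "A \<in> sets \<nu>"
  show "emeasure \<nu> A = (SUP C\<in>{C. compact C \<and> C \<subseteq> A}. emeasure \<nu> C)"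
  proof (rule antisym)
    show "(SUP C\<in>{C. compact C \<and> C \<subseteq> A}. emeasure \<nu> C) \<le> emeasure \<nu> A"
      using A by (intro SUP_least emeasure_mono) auto
    show "emeasure \<nu> A \<le> (SUP C\<in>{C. compact C \<and> C \<subseteq> A}. emeasure \<nu> C)"
    proof (rule ennreal_le_epsilon)
      fix e :: real assume "0 < e"
      interpret prob_space \<mu> using radon_probD(3)[OF \<mu>] .
      have A\<mu>: "A \<in> sets \<mu>" using A sets by simp
      have "0 < e / (B + 1)" using \<open>0 < e\<close> \<open>0 \<le> B\<close> by simp
      then obtain C where C: "compact C" "C \<subseteq> A" "C \<in> sets \<mu>" and small: "measure \<mu> (A - C) < e / (B + 1)"
        using radon_prob_inner_approx[OF \<mu> A\<mu>] by blast
      have "B * measure \<mu> (A - C) \<le> B * (e / (B + 1))"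
        using small \<open>0 \<le> B\<close> by (intro mult_left_mono) auto
      also have "\<dots> \<le> e"
        using \<open>0 < e\<close> \<open>0 \<le> B\<close> by (simp add: field_simps)
      finally have "B * measure \<mu> (A - C) \<le> e" .
      have "emeasure \<nu> A = emeasure \<nu> C + emeasure \<nu> (A - C)"
        using C A\<mu> sets by (subst plus_emeasure) (auto simp: Un_absorb1)
      also have "emeasure \<nu> C \<le> (SUP C\<in>{C. compact C \<and> C \<subseteq> A}. emeasure \<nu> C)"
        using C by (intro SUP_upper) auto
      also have "emeasure \<nu> (A - C) \<le> ennreal B * emeasure \<mu> (A - C)"
        using A\<mu> C by (intro dominated) auto
      also have "\<dots> \<le> ennreal e"
        using \<open>B * measure \<mu> (A - C) \<le> e\<close> \<open>0 \<le> B\<close>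
        by (simp add: emeasure_eq_measure ennreal_mult'[symmetric] ennreal_leI)
      finally show "emeasure \<nu> A \<le> (SUP C\<in>{C. compact C \<and> C \<subseteq> A}. emeasure \<nu> C) + ennreal e"
        by (simp add: add_mono)
    qed
  qed
qed

lemma radon_prob_density:
  fixes K :: "('a \<Rightarrow> 'b::metric_space) set"
  assumes \<mu>: "radon_prob K \<mu>" and w: "w \<in> borel_measurable \<mu>"
    and nonneg: "\<And>t. t \<in> K \<Longrightarrow> 0 \<le> w t" and bounded: "\<And>t. t \<in> K \<Longrightarrow> w t \<le> B"
    and total: "(\<integral>t. w t \<partial>\<mu>) = 1"
  shows "radon_prob K (density \<mu> (\<lambda>t. ennreal (w t)))"
proof (rule radon_prob_dominated[OF \<mu>])
  interpret prob_space \<mu> using radon_probD(3)[OF \<mu>] .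
  have space: "space \<mu> = K" using radon_probD(2)[OF \<mu>] .
  have "integrable \<mu> w"
    using w nonneg bounded by (intro integrable_const_bound[where B=B]) (auto simp: space)
  have "emeasure (density \<mu> (\<lambda>t. ennreal (w t))) (space \<mu>) = (\<integral>\<^sup>+t. ennreal (w t) \<partial>\<mu>)"
    using w by (subst emeasure_density) (auto intro!: nn_integral_cong split: split_indicator)
  also have "\<dots> = 1"
    using \<open>integrable \<mu> w\<close> total nonneg by (subst nn_integral_eq_integral) (auto simp: space)
  finally show "prob_space (density \<mu> (\<lambda>t. ennreal (w t)))"
    by (intro prob_spaceI) simp
  show "sets (density \<mu> (\<lambda>t. ennreal (w t))) = sets \<mu>" by simp
  obtain t where "t \<in> K" using not_empty space by blast
  then show "0 \<le> B" using nonneg bounded by (meson order_trans)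
  fix X assume X: "X \<in> sets \<mu>"
  have "emeasure (density \<mu> (\<lambda>t. ennreal (w t))) X = (\<integral>\<^sup>+t\<in>X. ennreal (w t) \<partial>\<mu>)"
    using X w by (simp add: emeasure_density)
  also have "\<dots> \<le> (\<integral>\<^sup>+t. ennreal B * indicator X t \<partial>\<mu>)"
    using bounded by (intro nn_integral_mono) (auto simp: space intro!: ennreal_leI split: split_indicator)
  also have "\<dots> = ennreal B * emeasure \<mu> X"
    using X by (rule nn_integral_cmult_indicator)
  finally show "emeasure (density \<mu> (\<lambda>t. ennreal (w t))) X \<le> ennreal B * emeasure \<mu> X" .
qed

lemma integral_scaleR_eq_0_if_weight_integral_eq_0:
  fixes g :: "'b \<Rightarrow> 'c::{banach, second_countable_topology}"
  assumes "integrable M w" and "AE t in M. 0 \<le> w t" and "(\<integral>t. w t \<partial>M) = 0"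
    and "g \<in> borel_measurable M"
  shows "(\<integral>t. w t *\<^sub>R g t \<partial>M) = 0"
proof -
  have "AE t in M. w t = 0" using assms(1-3) by (simp add: integral_nonneg_eq_0_iff_AE)
  then show ?thesis
    using assms(1,4) by (subst integral_cong_AE[where g="\<lambda>_. 0"]) auto
qed

lemma integral_scaleR_normalized_density:
  fixes g :: "'b \<Rightarrow> 'c::{banach, second_countable_topology}"
  assumes "w \<in> borel_measurable M" and "AE t in M. 0 \<le> w t" and "0 < W"
    and "g \<in> borel_measurable M"
  shows "(\<integral>t. w t *\<^sub>R g t \<partial>M) = W *\<^sub>R (\<integral>t. g t \<partial>density M (\<lambda>t. ennreal (w t / W)))"
proof -
  have "(\<integral>t. g t \<partial>density M (\<lambda>t. ennreal (w t / W))) = (\<integral>t. (w t / W) *\<^sub>R g t \<partial>M)"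
    using assms by (intro integral_density) auto
  also have "\<dots> = (1 / W) *\<^sub>R (\<integral>t. w t *\<^sub>R g t \<partial>M)"
    by (simp flip: integral_scaleR_right)
  finally show ?thesis using \<open>0 < W\<close> by simp
qed

definition finite_mixture :: "'b::topological_space set \<Rightarrow> 'i set \<Rightarrow> ('i \<Rightarrow> real) \<Rightarrow> ('i \<Rightarrow> 'b) \<Rightarrow> 'b measure" where
  "finite_mixture K I l u = distr (density (count_space I) (\<lambda>i. ennreal (l i))) (restrict_space borel K) u"

lemma integral_finite_mixture:
  fixes g :: "'b::topological_space \<Rightarrow> 'c::{banach, second_countable_topology}"
  assumes I: "finite I" and nonneg: "\<And>i. i \<in> I \<Longrightarrow> 0 \<le> l i" and u: "\<And>i. i \<in> I \<Longrightarrow> u i \<in> K"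
    and g: "g \<in> borel_measurable (restrict_space borel K)"
  shows "(\<integral>t. g t \<partial>finite_mixture K I l u) = (\<Sum>i\<in>I. l i *\<^sub>R g (u i))"
proof -
  have u_meas: "u \<in> measurable (density (count_space I) (\<lambda>i. ennreal (l i))) (restrict_space borel K)"
    using u by (simp add: measurable_count_space_eq1 space_restrict_space)
  have "(\<integral>t. g t \<partial>finite_mixture K I l u) = (\<integral>i. g (u i) \<partial>density (count_space I) (\<lambda>i. ennreal (l i)))"
    unfolding finite_mixture_def by (rule integral_distr[OF u_meas g])
  also have "\<dots> = (\<integral>i. l i *\<^sub>R g (u i) \<partial>count_space I)"
    using nonneg by (intro integral_density) (auto simp: AE_count_space)
  also have "\<dots> = (\<Sum>i\<in>I. l i *\<^sub>R g (u i))"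
    using I by (rule lebesgue_integral_count_space_finite)
  finally show ?thesis .
qed

lemma radon_prob_finite_mixture:
  fixes K :: "('a \<Rightarrow> 'b::metric_space) set"
  assumes I: "finite I" and nonneg: "\<And>i. i \<in> I \<Longrightarrow> 0 \<le> l i" and total: "sum l I = 1"
    and u: "\<And>i. i \<in> I \<Longrightarrow> u i \<in> K"
  shows "radon_prob K (finite_mixture K I l u)"
proof -
  define D where "D = density (count_space I) (\<lambda>i. ennreal (l i))"
  define \<nu> where "\<nu> = finite_mixture K I l u"
  have u_meas: "u \<in> measurable D (restrict_space borel K)"
    unfolding D_def using u by (simp add: measurable_count_space_eq1 space_restrict_space)
  have sets: "sets \<nu> = sets (restrict_space borel K)" and space: "space \<nu> = K"
    unfolding \<nu>_def finite_mixture_def by (auto simp: space_restrict_space)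
  have emeasure: "emeasure \<nu> A = emeasure D (u -` A \<inter> I)" if "A \<in> sets \<nu>" for A
  proof -
    have "A \<in> sets (restrict_space borel K)" using that sets by simp
    then show ?thesis unfolding \<nu>_def finite_mixture_def using u_meas
      by (simp add: emeasure_distr D_def)
  qed
  have "emeasure D I = 1"
    unfolding D_def using I nonneg total
    by (simp add: emeasure_density nn_integral_count_space_finite sum_ennreal)
  moreover have "u -` K \<inter> I = I" using u by auto
  ultimately have "emeasure \<nu> (space \<nu>) = 1"
    using emeasure[of K] sets.top[of \<nu>] by (simp add: space)
  then have "prob_space \<nu>" by (rule prob_spaceI)
  moreover have "emeasure \<nu> A = (SUP C\<in>{C. compact C \<and> C \<subseteq> A}. emeasure \<nu> C)"
    if A: "A \<in> sets \<nu>" for A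
  proof (rule antisym)
    define C where "C = A \<inter> u ` I"
    have C: "compact C" "C \<subseteq> A" unfolding C_def using I by (auto intro!: finite_imp_compact)
    have "A \<subseteq> K" using sets.sets_into_space[OF A] by (simp add: space)
    then have "C \<in> sets \<nu>" using C compact_in_sets_restrict_borel sets by blast
    moreover have "u -` C \<inter> I = u -` A \<inter> I" unfolding C_def by auto
    ultimately have "emeasure \<nu> A = emeasure \<nu> C" using emeasure A by simp
    also have "\<dots> \<le> (SUP C\<in>{C. compact C \<and> C \<subseteq> A}. emeasure \<nu> C)"
      using C by (intro SUP_upper) auto
    finally show "emeasure \<nu> A \<le> (SUP C\<in>{C. compact C \<and> C \<subseteq> A}. emeasure \<nu> C)" .
    show "(SUP C\<in>{C. compact C \<and> C \<subseteq> A}. emeasure \<nu> C) \<le> emeasure \<nu> A"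
      using A by (intro SUP_least emeasure_mono) auto
  qed
  ultimately show ?thesis
    unfolding radon_prob_def \<nu>_def[symmetric] using sets space by blast
qed

section \<open>The dual unit ball\<close>

lemma dual_ballD:
  assumes "t \<in> dual_ball sc"
  shows "t (x + y) = t x + t y" and "t (sc a x) = a * t x" and "norm (t x) \<le> norm x"
  using assms unfolding dual_ball_def by blast+

lemma dual_ball_zero: "t \<in> dual_ball sc \<Longrightarrow> t 0 = 0"
  using dual_ballD(3)[of t sc 0] by simp

lemma dual_ball_diff: "t \<in> dual_ball sc \<Longrightarrow> t (x - y) = t x - t y"
  by (metis dual_ballD(1) eq_diff_eq)

lemma norm_eval_diff_le: "t \<in> dual_ball sc \<Longrightarrow> norm (t x - t y) \<le> norm x + norm y"
  using norm_triangle_ineq4[of "t x" "t y"] dual_ballD(3)[of t sc x] dual_ballD(3)[of t sc y] by linarith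

lemma dual_ball_scaleR:
  assumes "scalar_structure sc" and "t \<in> dual_ball sc"
  shows "t (r *\<^sub>R x) = of_real r * t x"
proof -
  have "r *\<^sub>R x = sc (of_real r) x" using assms(1) unfolding scalar_structure_def by simp
  then show ?thesis using dual_ballD(2)[OF assms(2)] by simp
qed

lemma zero_in_dual_ball: "(\<lambda>x. 0) \<in> dual_ball sc"
  unfolding dual_ball_def by simp

lemma dual_ball_rotate:
  assumes "t \<in> dual_ball sc" and "norm \<alpha> = 1"
  shows "(\<lambda>x. \<alpha> * t x) \<in> dual_ball sc"
  using assms unfolding dual_ball_def by (auto simp: distrib_left norm_mult mult.left_commute)

lemma dual_ball_convex_sum:
  assumes "\<And>i. i \<in> I \<Longrightarrow> 0 \<le> l i" and "sum l I = 1" and "\<And>i. i \<in> I \<Longrightarrow> u i \<in> dual_ball sc"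
  shows "(\<lambda>x. \<Sum>i\<in>I. l i *\<^sub>R u i x) \<in> dual_ball sc"
  unfolding dual_ball_def
proof (intro CollectI conjI allI)
  fix x y
  have "(\<Sum>i\<in>I. l i *\<^sub>R u i (x + y)) = (\<Sum>i\<in>I. l i *\<^sub>R u i x + l i *\<^sub>R u i y)"
    by (intro sum.cong) (simp_all add: dual_ballD(1)[OF assms(3)] scaleR_add_right)
  then show "(\<Sum>i\<in>I. l i *\<^sub>R u i (x + y)) = (\<Sum>i\<in>I. l i *\<^sub>R u i x) + (\<Sum>i\<in>I. l i *\<^sub>R u i y)"
    by (simp add: sum.distrib)
  fix a
  show "(\<Sum>i\<in>I. l i *\<^sub>R u i (sc a x)) = a * (\<Sum>i\<in>I. l i *\<^sub>R u i x)"
    using assms(3) by (simp add: dual_ballD(2) sum_distrib_left)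
  have "norm (\<Sum>i\<in>I. l i *\<^sub>R u i x) \<le> (\<Sum>i\<in>I. norm (l i *\<^sub>R u i x))"
    by (rule norm_sum)
  also have "\<dots> \<le> (\<Sum>i\<in>I. l i * norm x)"
    using assms(1) dual_ballD(3)[OF assms(3)] by (intro sum_mono) (simp add: mult_left_mono)
  also have "\<dots> = norm x" using assms(2) by (simp add: sum_distrib_right[symmetric])
  finally show "norm (\<Sum>i\<in>I. l i *\<^sub>R u i x) \<le> norm x" .
qed

lemma eval_borel_measurable:
  "(\<lambda>t. t x) \<in> borel_measurable (restrict_space borel K)"
  by (intro measurable_restrict_space1 measurable_product_coordinates)

lemma radon_prob_barycenter_in_dual_ball:
  assumes \<nu>: "radon_prob (dual_ball sc) \<nu>"
  shows "is_barycenter (dual_ball sc) \<nu> (\<lambda>x. \<integral>t. t x \<partial>\<nu>)"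
proof -
  interpret prob_space \<nu> using radon_probD(3)[OF \<nu>] .
  have space: "space \<nu> = dual_ball sc" using radon_probD(2)[OF \<nu>] .
  have integrable: "integrable \<nu> (\<lambda>t. t x)" for x
    using radon_prob_integrable_bounded[OF \<nu> eval_borel_measurable] dual_ballD(3) by blast
  have "(\<lambda>x. \<integral>t. t x \<partial>\<nu>) \<in> dual_ball sc"
    unfolding dual_ball_def
  proof (intro CollectI conjI allI)
    fix x y
    have "(\<integral>t. t (x + y) \<partial>\<nu>) = (\<integral>t. t x + t y \<partial>\<nu>)"
      by (intro Bochner_Integration.integral_cong) (auto simp: space dual_ballD(1)[of _ sc])
    then show "(\<integral>t. t (x + y) \<partial>\<nu>) = (\<integral>t. t x \<partial>\<nu>) + (\<integral>t. t y \<partial>\<nu>)"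
      using integrable by simp
    fix a
    have "(\<integral>t. t (sc a x) \<partial>\<nu>) = (\<integral>t. a * t x \<partial>\<nu>)"
      by (intro Bochner_Integration.integral_cong) (auto simp: space dual_ballD(2))
    then show "(\<integral>t. t (sc a x) \<partial>\<nu>) = a * (\<integral>t. t x \<partial>\<nu>)" by simp
    have "norm (\<integral>t. t x \<partial>\<nu>) \<le> (\<integral>t. norm (t x) \<partial>\<nu>)" by (rule integral_norm_bound)
    also have "\<dots> \<le> (\<integral>t. norm x \<partial>\<nu>)"
      using integrable by (intro integral_mono) (auto simp: space dual_ballD(3)[of _ sc])
    also have "\<dots> = norm x" by (simp add: prob_space)
    finally show "norm (\<integral>t. t x \<partial>\<nu>) \<le> norm x" .
  qed
  then show ?thesis unfolding is_barycenter_def using integrable by simp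
qed

definition dual_norm :: "('a::real_normed_vector \<Rightarrow> 'b::real_normed_vector) \<Rightarrow> real" where
  "dual_norm t = (SUP x\<in>{x. norm x \<le> 1}. norm (t x))"

lemma dual_norm_bdd:
  assumes "t \<in> dual_ball sc"
  shows "bdd_above ((\<lambda>x. norm (t x)) ` {x. norm x \<le> 1})"
  using dual_ballD(3)[OF assms] by (intro bdd_aboveI2[of _ _ 1]) (auto intro: order_trans)

lemma dual_norm_upper: "t \<in> dual_ball sc \<Longrightarrow> norm x \<le> 1 \<Longrightarrow> norm (t x) \<le> dual_norm t"
  unfolding dual_norm_def by (intro cSUP_upper dual_norm_bdd) auto

lemma dual_norm_nonneg: "t \<in> dual_ball sc \<Longrightarrow> 0 \<le> dual_norm t"
  using dual_norm_upper[of t sc 0] dual_ball_zero[of t sc] by simp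

lemma dual_norm_le_one: "t \<in> dual_ball sc \<Longrightarrow> dual_norm t \<le> 1"
  unfolding dual_norm_def using dual_ballD(3)[of t sc]
  by (intro cSUP_least) (auto intro!: exI[of _ 0] intro: order_trans)

lemma norm_eval_le_dual_norm:
  assumes sc: "scalar_structure sc" and t: "t \<in> dual_ball sc"
  shows "norm (t x) \<le> dual_norm t * norm x"
proof (cases "x = 0")
  case True
  then show ?thesis using dual_ball_zero[OF t] by simp
next
  case False
  have "norm (t ((1 / norm x) *\<^sub>R x)) \<le> dual_norm t"
    using False by (intro dual_norm_upper[OF t]) simp
  then have "norm (t x) / norm x \<le> dual_norm t"
    by (simp add: dual_ball_scaleR[OF sc t] norm_divide)
  then show ?thesis using False by (simp add: divide_le_eq mult.commute)
qed

lemma dual_ball_divide_dual_norm: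
  assumes sc: "scalar_structure sc" and t: "t \<in> dual_ball sc" and "dual_norm t \<noteq> 0"
  shows "(\<lambda>x. (1 / dual_norm t) *\<^sub>R t x) \<in> dual_ball sc"
  unfolding dual_ball_def
proof (intro CollectI conjI allI)
  have "0 < dual_norm t" using assms dual_norm_nonneg[OF t] by simp
  fix x y
  show "(1 / dual_norm t) *\<^sub>R t (x + y) = (1 / dual_norm t) *\<^sub>R t x + (1 / dual_norm t) *\<^sub>R t y"
    by (simp add: dual_ballD(1)[OF t] scaleR_add_right)
  fix a
  show "(1 / dual_norm t) *\<^sub>R t (sc a x) = a * ((1 / dual_norm t) *\<^sub>R t x)"
    by (simp add: dual_ballD(2)[OF t])
  show "norm ((1 / dual_norm t) *\<^sub>R t x) \<le> norm x"
    using norm_eval_le_dual_norm[OF sc t, of x] \<open>0 < dual_norm t\<close> by (simp add: divide_le_eq mult.commute)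
qed

lemma dual_norm_almost_attained:
  assumes sc: "scalar_structure sc" and t: "t \<in> dual_ball sc" and "0 < e"
  obtains x where "norm x \<le> 1" and "t x = of_real (norm (t x))" and "dual_norm t - e < norm (t x)"
proof -
  have "\<exists>x\<in>{x. norm x \<le> 1}. dual_norm t - e < norm (t x)"
    unfolding dual_norm_def using \<open>0 < e\<close> dual_norm_bdd[OF t]
    by (subst less_cSUP_iff[symmetric]) (auto intro!: exI[of _ 0])
  then obtain x where x: "norm x \<le> 1" "dual_norm t - e < norm (t x)" by blast
  show ?thesis
  proof (cases "t x = 0")
    case True
    with x show ?thesis by (intro that[of x]) auto
  next
    case False
    define \<alpha> where "\<alpha> = of_real (norm (t x)) / t x"
    have "norm \<alpha> = 1" using False by (simp add: \<alpha>_def norm_divide)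
    then have "norm (sc \<alpha> x) = norm x" using sc unfolding scalar_structure_def by simp
    moreover have "t (sc \<alpha> x) = of_real (norm (t x))"
      using False by (simp add: dual_ballD(2)[OF t] \<alpha>_def)
    ultimately show ?thesis using x by (intro that[of "sc \<alpha> x"]) auto
  qed
qed

section \<open>Strongly affine functions\<close>

lemma strongly_affine_bounded:
  assumes "strongly_affine K f"
  obtains B where "\<And>t. t \<in> K \<Longrightarrow> norm (f t) \<le> B"
proof -
  have "\<forall>b\<in>Basis. \<exists>M. \<forall>t\<in>K. \<bar>f t \<bullet> b\<bar> \<le> M"
    using assms unfolding strongly_affine_def strongly_affine_real_def by blast
  then obtain M where M: "\<And>b t. b \<in> Basis \<Longrightarrow> t \<in> K \<Longrightarrow> \<bar>f t \<bullet> b\<bar> \<le> M b"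
    by metis
  have "norm (f t) \<le> (\<Sum>b\<in>Basis. M b)" if "t \<in> K" for t
    using norm_le_l1[of "f t"] sum_mono[of Basis "\<lambda>b. \<bar>f t \<bullet> b\<bar>" M] M that by force
  with that show ?thesis by blast
qed

lemma strongly_affine_measurable:
  "strongly_affine K f \<Longrightarrow> f \<in> borel_measurable (restrict_space borel K)"
  unfolding strongly_affine_def strongly_affine_real_def
  by (auto simp: borel_measurable_euclidean_space[where f=f])

lemma strongly_affine_integral:
  fixes f :: "('a \<Rightarrow> 'f::{real_normed_field, euclidean_space}) \<Rightarrow> 'f"
  assumes f: "strongly_affine K f" and \<nu>: "radon_prob K \<nu>" and r: "is_barycenter K \<nu> r"
  shows "(\<integral>t. f t \<partial>\<nu>) = f r"
proof (rule euclidean_eqI)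
  fix b :: 'f assume b: "b \<in> Basis"
  obtain B where "\<And>t. t \<in> K \<Longrightarrow> norm (f t) \<le> B" using strongly_affine_bounded[OF f] by blast
  then have "integrable \<nu> f"
    by (intro radon_prob_integrable_bounded[OF \<nu> strongly_affine_measurable[OF f]])
  then have "(\<integral>t. f t \<partial>\<nu>) \<bullet> b = (\<integral>t. f t \<bullet> b \<partial>\<nu>)" by simp
  also have "\<dots> = f r \<bullet> b"
    using f b \<nu> r unfolding strongly_affine_def strongly_affine_real_def by blast
  finally show "(\<integral>t. f t \<partial>\<nu>) \<bullet> b = f r \<bullet> b" .
qed

lemma strongly_affine_convex_sum:
  fixes f :: "('a::banach \<Rightarrow> 'f::{real_normed_field, euclidean_space}) \<Rightarrow> 'f"
  assumes f: "strongly_affine (dual_ball sc) f" and I: "finite I"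
    and "\<And>i. i \<in> I \<Longrightarrow> 0 \<le> l i" and "sum l I = 1" and "\<And>i. i \<in> I \<Longrightarrow> u i \<in> dual_ball sc"
  shows "f (\<lambda>x. \<Sum>i\<in>I. l i *\<^sub>R u i x) = (\<Sum>i\<in>I. l i *\<^sub>R f (u i))"
proof -
  define \<nu> where "\<nu> = finite_mixture (dual_ball sc) I l u"
  have \<nu>: "radon_prob (dual_ball sc) \<nu>"
    unfolding \<nu>_def using I assms(3-5) by (rule radon_prob_finite_mixture)
  have integral: "(\<integral>t. g t \<partial>\<nu>) = (\<Sum>i\<in>I. l i *\<^sub>R g (u i))"
    if "g \<in> borel_measurable (restrict_space borel (dual_ball sc))" for g :: "_ \<Rightarrow> 'f"
    unfolding \<nu>_def using I assms(3,5) that by (rule integral_finite_mixture)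
  have "is_barycenter (dual_ball sc) \<nu> (\<lambda>x. \<Sum>i\<in>I. l i *\<^sub>R u i x)"
    using radon_prob_barycenter_in_dual_ball[OF \<nu>] by (simp add: integral[OF eval_borel_measurable])
  then show ?thesis
    using strongly_affine_integral[OF f \<nu>] integral[OF strongly_affine_measurable[OF f]] by simp
qed

lemma strongly_affine_weighted_integral_pos:
  fixes f :: "('a::banach \<Rightarrow> 'f::{real_normed_field, euclidean_space}) \<Rightarrow> 'f"
  assumes f: "strongly_affine (dual_ball sc) f" and \<mu>: "radon_prob (dual_ball sc) \<mu>"
    and w: "w \<in> borel_measurable \<mu>"
    and nonneg: "\<And>t. t \<in> dual_ball sc \<Longrightarrow> 0 \<le> w t" and bounded: "\<And>t. t \<in> dual_ball sc \<Longrightarrow> w t \<le> B"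
    and W: "0 < (\<integral>t. w t \<partial>\<mu>)"
  shows "\<exists>r\<in>dual_ball sc. (\<forall>x. (\<integral>t. w t *\<^sub>R t x \<partial>\<mu>) = (\<integral>t. w t \<partial>\<mu>) *\<^sub>R r x) \<and>
           (\<integral>t. w t *\<^sub>R f t \<partial>\<mu>) = (\<integral>t. w t \<partial>\<mu>) *\<^sub>R f r"
proof -
  define W where "W = (\<integral>t. w t \<partial>\<mu>)"
  define \<nu> where "\<nu> = density \<mu> (\<lambda>t. ennreal (w t / W))"
  have space: "space \<mu> = dual_ball sc" using radon_probD(2)[OF \<mu>] .
  have \<nu>: "radon_prob (dual_ball sc) \<nu>"
    unfolding \<nu>_def
  proof (rule radon_prob_density[OF \<mu>])
    show "(\<lambda>t. w t / W) \<in> borel_measurable \<mu>" using w by simp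
    show "w t / W \<le> B / W" if "t \<in> dual_ball sc" for t
      using bounded[OF that] W by (simp add: W_def divide_right_mono)
    show "(\<integral>t. w t / W \<partial>\<mu>) = 1" using W by (simp add: W_def)
  qed (use nonneg W in \<open>simp add: W_def\<close>)
  have integral: "(\<integral>t. w t *\<^sub>R g t \<partial>\<mu>) = W *\<^sub>R (\<integral>t. g t \<partial>\<nu>)"
    if "g \<in> borel_measurable (restrict_space borel (dual_ball sc))" for g :: "_ \<Rightarrow> 'f"
    unfolding \<nu>_def using w nonneg W that
    by (intro integral_scaleR_normalized_density)
       (auto simp: W_def space measurable_cong_sets[OF radon_probD(1)[OF \<mu>] refl])
  define r where "r = (\<lambda>x. \<integral>t. t x \<partial>\<nu>)"
  have r: "is_barycenter (dual_ball sc) \<nu> r"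
    unfolding r_def by (rule radon_prob_barycenter_in_dual_ball[OF \<nu>])
  have "r \<in> dual_ball sc" using r unfolding is_barycenter_def by blast
  moreover have "(\<integral>t. w t *\<^sub>R t x \<partial>\<mu>) = W *\<^sub>R r x" for x
    using integral[OF eval_borel_measurable] unfolding r_def by simp
  moreover have "(\<integral>t. w t *\<^sub>R f t \<partial>\<mu>) = W *\<^sub>R f r"
    using integral[OF strongly_affine_measurable[OF f]] strongly_affine_integral[OF f \<nu> r] by simp
  ultimately show ?thesis unfolding W_def by blast
qed

lemma strongly_affine_weighted_integral:
  fixes f :: "('a::banach \<Rightarrow> 'f::{real_normed_field, euclidean_space}) \<Rightarrow> 'f"
  assumes f: "strongly_affine (dual_ball sc) f" and \<mu>: "radon_prob (dual_ball sc) \<mu>"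
    and w: "w \<in> borel_measurable (restrict_space borel (dual_ball sc))"
    and nonneg: "\<And>t. t \<in> dual_ball sc \<Longrightarrow> 0 \<le> w t" and bounded: "\<And>t. t \<in> dual_ball sc \<Longrightarrow> w t \<le> B"
  shows "\<exists>r\<in>dual_ball sc. (\<forall>x. (\<integral>t. w t *\<^sub>R t x \<partial>\<mu>) = (\<integral>t. w t \<partial>\<mu>) *\<^sub>R r x) \<and>
           (\<integral>t. w t *\<^sub>R f t \<partial>\<mu>) = (\<integral>t. w t \<partial>\<mu>) *\<^sub>R f r"
proof -
  have measurable: "g \<in> borel_measurable \<mu>"
    if "g \<in> borel_measurable (restrict_space borel (dual_ball sc))" for g :: "_ \<Rightarrow> 'c::topological_space"
    using that by (simp add: measurable_cong_sets[OF radon_probD(1)[OF \<mu>] refl])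
  have "integrable \<mu> w" using w nonneg bounded by (intro radon_prob_integrable_bounded[OF \<mu>]) auto
  have "AE t in \<mu>. 0 \<le> w t" using nonneg by (auto simp: radon_probD(2)[OF \<mu>] intro!: AE_I2)
  then have "0 \<le> (\<integral>t. w t \<partial>\<mu>)" by (rule integral_nonneg_AE)
  show ?thesis
  proof (cases "(\<integral>t. w t \<partial>\<mu>) = 0")
    case True
    note zero = integral_scaleR_eq_0_if_weight_integral_eq_0[OF \<open>integrable \<mu> w\<close>
        \<open>AE t in \<mu>. 0 \<le> w t\<close> True measurable]
    show ?thesis
      using zero[OF eval_borel_measurable] zero[OF strongly_affine_measurable[OF f]] True
      by (intro bexI[of _ "\<lambda>x. 0"] zero_in_dual_ball) auto
  next
    case False
    with \<open>0 \<le> (\<integral>t. w t \<partial>\<mu>)\<close> show ?thesis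
      using f \<mu> measurable[OF w] nonneg bounded by (intro strongly_affine_weighted_integral_pos) auto
  qed
qed

section \<open>Inner products on the scalar field\<close>

definition signed_basis :: "'a::euclidean_space \<times> bool \<Rightarrow> 'a" where
  "signed_basis = (\<lambda>(b, s). if s then b else - b)"

lemma norm_signed_basis: "k \<in> Basis \<times> UNIV \<Longrightarrow> norm (signed_basis k) = 1"
  by (auto simp: signed_basis_def)

lemma abs_inner_signed_basis_le: "k \<in> Basis \<times> UNIV \<Longrightarrow> \<bar>v \<bullet> signed_basis k\<bar> \<le> norm v"
  using Cauchy_Schwarz_ineq2[of v "signed_basis k"] by (simp add: norm_signed_basis)

lemma inner_eq_sum_signed_basis:
  fixes h v :: "'a::euclidean_space"
  shows "h \<bullet> v = (\<Sum>k\<in>Basis \<times> UNIV. max 0 (h \<bullet> signed_basis k) * (v \<bullet> signed_basis k))"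
proof -
  have "(\<Sum>k\<in>Basis \<times> UNIV. max 0 (h \<bullet> signed_basis k) * (v \<bullet> signed_basis k))
      = (\<Sum>b\<in>Basis. \<Sum>s\<in>UNIV. max 0 (h \<bullet> signed_basis (b, s)) * (v \<bullet> signed_basis (b, s)))"
    by (simp add: sum.cartesian_product)
  also have "\<dots> = (\<Sum>b\<in>Basis. (h \<bullet> b) * (v \<bullet> b))"
    by (intro sum.cong refl) (simp add: UNIV_bool signed_basis_def max_def)
  also have "\<dots> = h \<bullet> v" by (rule euclidean_inner[symmetric])
  finally show ?thesis by simp
qed

lemma inner_mult_unit:
  fixes \<beta> a b :: "'a::{real_normed_div_algebra, real_inner}"
  assumes "norm \<beta> = 1"
  shows "(\<beta> * a) \<bullet> (\<beta> * b) = a \<bullet> b"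
proof -
  have "(\<beta> * a) \<bullet> (\<beta> * b) = ((norm (\<beta> * (a + b)))\<^sup>2 - (norm (\<beta> * a))\<^sup>2 - (norm (\<beta> * b))\<^sup>2) / 2"
    by (simp add: dot_norm distrib_left)
  also have "\<dots> = ((norm (a + b))\<^sup>2 - (norm a)\<^sup>2 - (norm b)\<^sup>2) / 2"
    using assms by (simp add: norm_mult)
  also have "\<dots> = a \<bullet> b" by (rule dot_norm[symmetric])
  finally show ?thesis .
qed

lemma inner_unit_eq_inner_one:
  fixes \<beta> v :: "'a::{real_normed_div_algebra, real_inner}"
  assumes "norm \<beta> = 1"
  shows "v \<bullet> \<beta> = (inverse \<beta> * v) \<bullet> 1"
proof -
  have "norm (inverse \<beta>) = 1" using assms by (simp add: norm_inverse)
  moreover have "inverse \<beta> * \<beta> = 1" using assms by (auto intro: left_inverse)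
  ultimately show ?thesis using inner_mult_unit[of "inverse \<beta>" v \<beta>] by simp
qed

(* Since 1 is a unit vector, v \<bullet> 1 plays the role of Re v; for the complex field it is Re v. *)
lemma inner_one_le_norm: "(v :: 'a::{real_normed_algebra_1, real_inner}) \<bullet> 1 \<le> norm v"
  using norm_cauchy_schwarz[of v 1] by simp

lemma inner_one_of_real: "(of_real r :: 'a::{real_normed_algebra_1, real_inner}) \<bullet> 1 = r"
  by (simp add: of_real_def dot_square_norm)

lemma power2_norm_diff_scaleR:
  fixes a b :: "'a::real_inner"
  shows "(norm (a - s *\<^sub>R b))\<^sup>2 = (norm a)\<^sup>2 - 2 * s * (a \<bullet> b) + s\<^sup>2 * (norm b)\<^sup>2"
proof -
  have "(norm (a - s *\<^sub>R b))\<^sup>2 = (a - s *\<^sub>R b) \<bullet> (a - s *\<^sub>R b)"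
    by (rule power2_norm_eq_inner)
  also have "\<dots> = a \<bullet> a - 2 * s * (a \<bullet> b) + s\<^sup>2 * (b \<bullet> b)"
    by (simp add: inner_diff_left inner_diff_right inner_commute power2_eq_square algebra_simps)
  finally show ?thesis by (simp add: power2_norm_eq_inner)
qed

section \<open>Descent and almost everywhere convergence\<close>

lemma convex_descent_arbitrarily_small:
  fixes Q :: "'a::real_vector \<Rightarrow> real"
  assumes "convex B" and "B \<noteq> {}"
    and descent: "\<And>x0 \<eta>. x0 \<in> B \<Longrightarrow> 0 < \<eta> \<Longrightarrow> \<exists>x\<in>B. \<forall>s. 0 \<le> s \<longrightarrow> s \<le> 1 \<longrightarrow>
        Q (x0 + s *\<^sub>R (x - x0)) \<le> (1 - 2 * s) * Q x0 + 2 * s * \<eta> + C * s\<^sup>2"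
    and "0 < \<epsilon>"
  shows "\<exists>x\<in>B. Q x < \<epsilon>"
proof (rule ccontr)
  assume "\<not> ?thesis"
  then have large: "\<And>x. x \<in> B \<Longrightarrow> \<epsilon> \<le> Q x" by (meson not_le)
  define d where "d = (INF x\<in>B. Q x)"
  have bdd: "bdd_below (Q ` B)" using large by (rule bdd_belowI2)
  have d_le: "d \<le> Q x" if "x \<in> B" for x unfolding d_def using bdd that by (rule cINF_lower)
  have "\<epsilon> \<le> d" unfolding d_def using \<open>B \<noteq> {}\<close> large by (rule cINF_greatest)
  then have "0 < d" using \<open>0 < \<epsilon>\<close> by simp
  (* Once Q x0 is within s d / 2 of the infimum d, a step of length s towards x would go below d. *)
  define C' where "C' = max C 1"
  define s where "s = min (1 / 2) (d / (2 * C'))"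
  have "0 < s" "s \<le> 1 / 2" using \<open>0 < d\<close> by (simp_all add: s_def C'_def)
  have "C' * s \<le> d / 2"
    using \<open>0 < d\<close> by (simp add: s_def C'_def min_def field_simps)
  have "\<exists>x0\<in>B. Q x0 < d + s * d / 2"
    unfolding d_def using \<open>B \<noteq> {}\<close> bdd \<open>0 < s\<close> \<open>0 < d\<close>
    by (subst cINF_less_iff[symmetric]) (simp_all add: d_def)
  then obtain x0 where "x0 \<in> B" and x0: "Q x0 < d + s * d / 2" by blast
  obtain x where "x \<in> B" and x: "\<forall>s. 0 \<le> s \<longrightarrow> s \<le> 1 \<longrightarrow>
      Q (x0 + s *\<^sub>R (x - x0)) \<le> (1 - 2 * s) * Q x0 + 2 * s * (d / 4) + C * s\<^sup>2"
    using descent[OF \<open>x0 \<in> B\<close>, of "d / 4"] \<open>0 < d\<close> by auto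
  have "x0 + s *\<^sub>R (x - x0) = (1 - s) *\<^sub>R x0 + s *\<^sub>R x" by (simp add: algebra_simps)
  also have "\<dots> \<in> B" using \<open>convex B\<close> \<open>x0 \<in> B\<close> \<open>x \<in> B\<close> \<open>0 < s\<close> \<open>s \<le> 1 / 2\<close>
    by (intro convexD) auto
  finally have "d \<le> Q (x0 + s *\<^sub>R (x - x0))" by (rule d_le)
  also have "\<dots> \<le> (1 - 2 * s) * Q x0 + 2 * s * (d / 4) + C * s\<^sup>2"
    using x[rule_format, of s] \<open>0 < s\<close> \<open>s \<le> 1 / 2\<close> by simp
  also have "\<dots> \<le> (1 - 2 * s) * (d + s * d / 2) + 2 * s * (d / 4) + C' * s\<^sup>2"
    using x0 \<open>0 < s\<close> \<open>s \<le> 1 / 2\<close> by (intro add_mono mult_left_mono mult_right_mono) (auto simp: C'_def)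
  also have "\<dots> = d - s * d - s\<^sup>2 * d + s * (C' * s)"
    by (simp add: field_simps power2_eq_square)
  also have "\<dots> \<le> d - s * d - s\<^sup>2 * d + s * (d / 2)"
    using mult_left_mono[OF \<open>C' * s \<le> d / 2\<close> less_imp_le[OF \<open>0 < s\<close>]] by (rule add_left_mono)
  also have "\<dots> = d - s * d / 2 - s\<^sup>2 * d" by simp
  finally have "d \<le> d - s * d / 2 - s\<^sup>2 * d" .
  moreover have "0 < s * d" "0 \<le> s\<^sup>2 * d" using \<open>0 < s\<close> \<open>0 < d\<close> by simp_all
  ultimately show False by linarith
qed

lemma AE_tendsto_zero_if_summable_integrals:
  fixes F :: "nat \<Rightarrow> 'b \<Rightarrow> real"
  assumes integrable: "\<And>n. integrable M (F n)" and nonneg: "\<And>n t. 0 \<le> F n t"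
    and summable: "summable (\<lambda>n. \<integral>t. F n t \<partial>M)"
  shows "AE t in M. (\<lambda>n. F n t) \<longlonglongrightarrow> 0"
proof -
  have "(\<integral>\<^sup>+t. (\<Sum>n. ennreal (F n t)) \<partial>M) = (\<Sum>n. \<integral>\<^sup>+t. ennreal (F n t) \<partial>M)"
    using integrable by (intro nn_integral_suminf) auto
  also have "\<dots> = (\<Sum>n. ennreal (\<integral>t. F n t \<partial>M))"
    using integrable nonneg by (simp add: nn_integral_eq_integral)
  also have "\<dots> = ennreal (\<Sum>n. \<integral>t. F n t \<partial>M)"
    using summable nonneg by (intro suminf_ennreal2) (auto intro: integral_nonneg_AE)
  finally have "(\<integral>\<^sup>+t. (\<Sum>n. ennreal (F n t)) \<partial>M) \<noteq> \<infinity>" by simp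
  then have "AE t in M. (\<Sum>n. ennreal (F n t)) \<noteq> \<infinity>"
    using integrable by (intro nn_integral_PInf_AE) auto
  then show ?thesis
    by eventually_elim (use nonneg in \<open>auto intro: summable_LIMSEQ_zero summable_suminf_not_top\<close>)
qed

lemma tendsto_if_power2_norm_diff_tendsto_0:
  fixes X :: "nat \<Rightarrow> 'a::real_normed_vector"
  assumes "(\<lambda>n. (norm (a - X n))\<^sup>2) \<longlonglongrightarrow> 0"
  shows "X \<longlonglongrightarrow> a"
proof -
  have "(\<lambda>n. norm (X n - a)) \<longlonglongrightarrow> 0"
    using tendsto_real_sqrt[OF assms] by (simp add: norm_minus_commute)
  then show ?thesis by (simp add: LIM_zero_cancel tendsto_norm_zero_iff)
qed

section \<open>Homogeneous strongly affine functions\<close>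

locale homogeneous_strongly_affine =
  fixes sc :: "'f::{real_normed_field, euclidean_space} \<Rightarrow> 'a::banach \<Rightarrow> 'a"
    and f :: "('a \<Rightarrow> 'f) \<Rightarrow> 'f"
  assumes scalar_structure: "scalar_structure sc"
    and homogeneous: "S_homogeneous (dual_ball sc) f"
    and affine: "strongly_affine (dual_ball sc) f"
begin

lemma f_measurable [measurable]: "f \<in> borel_measurable (restrict_space borel (dual_ball sc))"
  using affine by (rule strongly_affine_measurable)

lemmas eval_measurable [measurable] = eval_borel_measurable[where K="dual_ball sc"]

definition sup_norm :: real where
  "sup_norm = (SUP t\<in>dual_ball sc. norm (f t))"

lemma norm_f_le_sup_norm:
  assumes "t \<in> dual_ball sc"
  shows "norm (f t) \<le> sup_norm"
proof -
  obtain B where "\<And>t. t \<in> dual_ball sc \<Longrightarrow> norm (f t) \<le> B"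
    using strongly_affine_bounded[OF affine] by blast
  then show ?thesis unfolding sup_norm_def using assms by (intro cSUP_upper bdd_aboveI2) auto
qed

lemma sup_norm_nonneg: "0 \<le> sup_norm"
  using norm_f_le_sup_norm[OF zero_in_dual_ball] norm_ge_zero order_trans by blast

lemma norm_f_minus_eval_le: "t \<in> dual_ball sc \<Longrightarrow> norm (f t - t x) \<le> sup_norm + norm x"
  using norm_triangle_ineq4[of "f t" "t x"] norm_f_le_sup_norm dual_ballD(3)[of t sc x] by fastforce

lemma f_rotate: "t \<in> dual_ball sc \<Longrightarrow> norm \<alpha> = 1 \<Longrightarrow> f (\<lambda>x. \<alpha> * t x) = \<alpha> * f t"
  using homogeneous unfolding S_homogeneous_def by blast

lemma f_zero: "f (\<lambda>x. 0) = 0"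
  using f_rotate[OF zero_in_dual_ball, of "-1"] by simp

lemma f_scaleR:
  assumes "0 \<le> \<rho>" and "\<rho> \<le> 1" and t: "t \<in> dual_ball sc"
  shows "f (\<lambda>x. \<rho> *\<^sub>R t x) = \<rho> *\<^sub>R f t"
proof -
  define l where "l = (\<lambda>b::bool. if b then \<rho> else 1 - \<rho>)"
  define u where "u = (\<lambda>b::bool. if b then t else (\<lambda>x. 0))"
  have "f (\<lambda>x. \<Sum>b\<in>UNIV. l b *\<^sub>R u b x) = (\<Sum>b\<in>UNIV. l b *\<^sub>R f (u b))"
    using assms zero_in_dual_ball
    by (intro strongly_affine_convex_sum[OF affine]) (auto simp: l_def u_def UNIV_bool)
  then show ?thesis by (simp add: l_def u_def UNIV_bool f_zero)
qed

lemma norm_f_le_dual_norm: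
  assumes s: "s \<in> dual_ball sc"
  shows "norm (f s) \<le> dual_norm s * sup_norm"
proof (cases "dual_norm s = 0")
  case True
  then have "s = (\<lambda>x. 0)"
    using norm_eval_le_dual_norm[OF scalar_structure s] by (intro ext) simp
  then show ?thesis using f_zero True by simp
next
  case False
  define \<rho> where "\<rho> = dual_norm s"
  have "0 < \<rho>" using False dual_norm_nonneg[OF s] by (simp add: \<rho>_def)
  define v where "v = (\<lambda>x. (1 / \<rho>) *\<^sub>R s x)"
  have v: "v \<in> dual_ball sc"
    unfolding v_def \<rho>_def using scalar_structure s False by (rule dual_ball_divide_dual_norm)
  have "s = (\<lambda>x. \<rho> *\<^sub>R v x)" using \<open>0 < \<rho>\<close> by (simp add: v_def)
  then have "f s = f (\<lambda>x. \<rho> *\<^sub>R v x)" by (rule arg_cong)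
  also have "\<dots> = \<rho> *\<^sub>R f v"
    using \<open>0 < \<rho>\<close> dual_norm_le_one[OF s] v by (intro f_scaleR) (auto simp: \<rho>_def)
  finally show ?thesis
    using norm_f_le_sup_norm[OF v] \<open>0 < \<rho>\<close> by (simp add: \<rho>_def mult_left_mono)
qed

lemma Re_f_le_eval:
  assumes s: "s \<in> dual_ball sc" and "0 < \<eta>"
  obtains x where "norm x \<le> sup_norm" and "f s \<bullet> 1 \<le> s x \<bullet> 1 + \<eta>"
proof -
  define e where "e = \<eta> / (sup_norm + 1)"
  have "0 < e" using \<open>0 < \<eta>\<close> sup_norm_nonneg by (simp add: e_def)
  have "sup_norm * e \<le> \<eta>"
    using \<open>0 < \<eta>\<close> sup_norm_nonneg by (simp add: e_def field_simps)
  obtain x where x: "norm x \<le> 1" "s x = of_real (norm (s x))" "dual_norm s - e < norm (s x)"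
    using dual_norm_almost_attained[OF scalar_structure s \<open>0 < e\<close>] by blast
  have "s (sup_norm *\<^sub>R x) = of_real sup_norm * s x"
    by (rule dual_ball_scaleR[OF scalar_structure s])
  also have "\<dots> = of_real (sup_norm * norm (s x))" by (metis x(2) of_real_mult)
  finally have "s (sup_norm *\<^sub>R x) \<bullet> 1 = sup_norm * norm (s x)" by (simp only: inner_one_of_real)
  have "f s \<bullet> 1 \<le> dual_norm s * sup_norm"
    using inner_one_le_norm norm_f_le_dual_norm[OF s] by (rule order_trans)
  also have "\<dots> \<le> (norm (s x) + e) * sup_norm"
    using x(3) sup_norm_nonneg by (intro mult_right_mono) auto
  also have "\<dots> \<le> s (sup_norm *\<^sub>R x) \<bullet> 1 + \<eta>"
    using \<open>s (sup_norm *\<^sub>R x) \<bullet> 1 = sup_norm * norm (s x)\<close> \<open>sup_norm * e \<le> \<eta>\<close>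
    by (simp add: algebra_simps)
  finally show ?thesis
    using x(1) sup_norm_nonneg by (intro that[of "sup_norm *\<^sub>R x"]) (auto intro: mult_left_le)
qed

lemma weighted_sum_Re_f_le_eval:
  assumes I: "finite I" and W: "\<And>k. k \<in> I \<Longrightarrow> 0 \<le> W k"
    and u: "\<And>k. k \<in> I \<Longrightarrow> u k \<in> dual_ball sc" and "0 < \<eta>"
  obtains x where "norm x \<le> sup_norm"
    and "(\<Sum>k\<in>I. W k * (f (u k) \<bullet> 1)) \<le> (\<Sum>k\<in>I. W k * (u k x \<bullet> 1)) + \<eta>"
proof (cases "sum W I = 0")
  case True
  then have "\<forall>k\<in>I. W k = 0" using sum_nonneg_eq_0_iff[OF I] W by blast
  then show ?thesis using \<open>0 < \<eta>\<close> sup_norm_nonneg by (intro that[of 0]) simp_all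
next
  case False
  define total where "total = sum W I"
  have "0 < total" using False W unfolding total_def by (metis sum_nonneg order_le_less)
  define l where "l k = W k / total" for k
  have l: "\<And>k. k \<in> I \<Longrightarrow> 0 \<le> l k" "sum l I = 1"
    using W \<open>0 < total\<close> by (simp_all add: l_def total_def flip: sum_divide_distrib)
  define s where "s x = (\<Sum>k\<in>I. l k *\<^sub>R u k x)" for x
  have s: "s \<in> dual_ball sc"
    unfolding s_def using l u by (rule dual_ball_convex_sum)
  have "f s = (\<Sum>k\<in>I. l k *\<^sub>R f (u k))"
    unfolding s_def using affine I l u by (rule strongly_affine_convex_sum)
  then have f_sum: "(\<Sum>k\<in>I. W k * (f (u k) \<bullet> 1)) = total * (f s \<bullet> 1)"
    using \<open>0 < total\<close> by (simp add: l_def inner_sum_left sum_distrib_left)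
  have eval_sum: "(\<Sum>k\<in>I. W k * (u k x \<bullet> 1)) = total * (s x \<bullet> 1)" for x
    using \<open>0 < total\<close> by (simp add: s_def l_def inner_sum_left sum_distrib_left)
  have "0 < \<eta> / total" using \<open>0 < \<eta>\<close> \<open>0 < total\<close> by simp
  then obtain x where x: "norm x \<le> sup_norm" "f s \<bullet> 1 \<le> s x \<bullet> 1 + \<eta> / total"
    by (rule Re_f_le_eval[OF s])
  have "total * (f s \<bullet> 1) \<le> total * (s x \<bullet> 1) + \<eta>"
    using mult_left_mono[OF x(2), of total] \<open>0 < total\<close> by (simp add: distrib_left)
  with x(1) show ?thesis unfolding f_sum[symmetric] eval_sum[symmetric] by (rule that)
qed

end

section \<open>Approximation in mean square\<close>

locale homogeneous_strongly_affine_radon = homogeneous_strongly_affine sc f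
  for sc :: "'f::{real_normed_field, euclidean_space} \<Rightarrow> 'a::banach \<Rightarrow> 'a" and f +
  fixes \<mu> :: "('a \<Rightarrow> 'f) measure"
  assumes radon: "radon_prob (dual_ball sc) \<mu>"
begin

lemma space_eq: "space \<mu> = dual_ball sc"
  using radon by (rule radon_probD)

lemma integrable_inner:
  fixes g h :: "('a \<Rightarrow> 'f) \<Rightarrow> 'f"
  assumes "g \<in> borel_measurable (restrict_space borel (dual_ball sc))"
    and "h \<in> borel_measurable (restrict_space borel (dual_ball sc))"
    and "\<And>t. t \<in> dual_ball sc \<Longrightarrow> norm (g t) \<le> B" and "\<And>t. t \<in> dual_ball sc \<Longrightarrow> norm (h t) \<le> C"
  shows "integrable \<mu> (\<lambda>t. g t \<bullet> h t)"
proof (rule radon_prob_integrable_bounded[OF radon, where B="B * C"])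
  show "(\<lambda>t. g t \<bullet> h t) \<in> borel_measurable (restrict_space borel (dual_ball sc))"
    using assms(1,2) by measurable
  fix t assume t: "t \<in> dual_ball sc"
  have "0 \<le> B" using assms(3)[OF t] norm_ge_zero order_trans by blast
  have "norm (g t \<bullet> h t) \<le> norm (g t) * norm (h t)" using Cauchy_Schwarz_ineq2 by simp
  also have "\<dots> \<le> B * C" using assms(3,4)[OF t] \<open>0 \<le> B\<close> by (intro mult_mono) auto
  finally show "norm (g t \<bullet> h t) \<le> B * C" .
qed

lemma integral_weighted_inner:
  fixes g :: "('a \<Rightarrow> 'f) \<Rightarrow> 'f"
  assumes w: "w \<in> borel_measurable (restrict_space borel (dual_ball sc))"
    and w_nonneg: "\<And>t. 0 \<le> w t" and w_bounded: "\<And>t. t \<in> dual_ball sc \<Longrightarrow> w t \<le> B"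
    and g: "g \<in> borel_measurable (restrict_space borel (dual_ball sc))"
    and g_bounded: "\<And>t. t \<in> dual_ball sc \<Longrightarrow> norm (g t) \<le> C"
  shows "(\<integral>t. w t * (g t \<bullet> \<beta>) \<partial>\<mu>) = (\<integral>t. w t *\<^sub>R g t \<partial>\<mu>) \<bullet> \<beta>"
proof -
  have "integrable \<mu> (\<lambda>t. w t *\<^sub>R g t)"
  proof (rule radon_prob_integrable_bounded[OF radon, where B="B * C"])
    show "(\<lambda>t. w t *\<^sub>R g t) \<in> borel_measurable (restrict_space borel (dual_ball sc))"
      using w g by measurable
    show "norm (w t *\<^sub>R g t) \<le> B * C" if "t \<in> dual_ball sc" for t
      using w_bounded[OF that] w_nonneg[of t] g_bounded[OF that]
      by (auto intro: mult_mono order_trans[OF norm_ge_zero])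
  qed
  then show ?thesis by (simp flip: integral_inner_left)
qed

lemma weighted_direction:
  assumes h [measurable]: "h \<in> borel_measurable (restrict_space borel (dual_ball sc))"
    and h_bounded: "\<And>t. t \<in> dual_ball sc \<Longrightarrow> norm (h t) \<le> B" and \<beta>: "norm \<beta> = 1"
  shows "\<exists>W u. 0 \<le> W \<and> u \<in> dual_ball sc \<and>
           (\<integral>t. max 0 (h t \<bullet> \<beta>) * (f t \<bullet> \<beta>) \<partial>\<mu>) = W * (f u \<bullet> 1) \<and>
           (\<forall>x. (\<integral>t. max 0 (h t \<bullet> \<beta>) * (t x \<bullet> \<beta>) \<partial>\<mu>) = W * (u x \<bullet> 1))"
proof -
  define w where "w t = max 0 (h t \<bullet> \<beta>)" for t
  have w_meas [measurable]: "w \<in> borel_measurable (restrict_space borel (dual_ball sc))"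
    unfolding w_def by measurable
  have w_nonneg: "0 \<le> w t" for t unfolding w_def by simp
  have w_bounded: "w t \<le> B" if "t \<in> dual_ball sc" for t
    using Cauchy_Schwarz_ineq2[of "h t" \<beta>] h_bounded[OF that] \<beta> norm_ge_zero[of "h t"]
    unfolding w_def by (auto simp: abs_le_iff)
  obtain r where r: "r \<in> dual_ball sc"
    and r_eval: "\<And>x. (\<integral>t. w t *\<^sub>R t x \<partial>\<mu>) = (\<integral>t. w t \<partial>\<mu>) *\<^sub>R r x"
    and r_f: "(\<integral>t. w t *\<^sub>R f t \<partial>\<mu>) = (\<integral>t. w t \<partial>\<mu>) *\<^sub>R f r"
    using strongly_affine_weighted_integral[OF affine radon w_meas w_nonneg w_bounded] by blast
  define W where "W = (\<integral>t. w t \<partial>\<mu>)"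
  (* Rotating r by the inverse of \<beta> (homogeneity) turns the inner product with \<beta> into a real part. *)
  define u where "u x = inverse \<beta> * r x" for x
  have inv: "norm (inverse \<beta>) = 1" using \<beta> by (simp add: norm_inverse)
  have weighted_inner: "(\<integral>t. w t * (g t \<bullet> \<beta>) \<partial>\<mu>) = (\<integral>t. w t *\<^sub>R g t \<partial>\<mu>) \<bullet> \<beta>"
    if "g \<in> borel_measurable (restrict_space borel (dual_ball sc))"
      and "\<And>t. t \<in> dual_ball sc \<Longrightarrow> norm (g t) \<le> C" for g C
    using w_meas w_nonneg w_bounded that by (rule integral_weighted_inner)
  show ?thesis
  proof (intro exI conjI allI)
    show "0 \<le> W" unfolding W_def using w_nonneg by simp
    show "u \<in> dual_ball sc" unfolding u_def using r inv by (rule dual_ball_rotate)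
    have "(\<integral>t. w t * (f t \<bullet> \<beta>) \<partial>\<mu>) = W * (f r \<bullet> \<beta>)"
      using weighted_inner[OF f_measurable norm_f_le_sup_norm] r_f by (simp add: W_def)
    also have "f r \<bullet> \<beta> = f u \<bullet> 1"
      unfolding u_def f_rotate[OF r inv] by (rule inner_unit_eq_inner_one[OF \<beta>])
    finally show "(\<integral>t. max 0 (h t \<bullet> \<beta>) * (f t \<bullet> \<beta>) \<partial>\<mu>) = W * (f u \<bullet> 1)"
      by (simp add: w_def)
  next
    fix x
    have "(\<integral>t. w t * (t x \<bullet> \<beta>) \<partial>\<mu>) = W * (r x \<bullet> \<beta>)"
      using weighted_inner[OF eval_borel_measurable dual_ballD(3)] r_eval by (simp add: W_def)
    also have "r x \<bullet> \<beta> = u x \<bullet> 1"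
      unfolding u_def by (rule inner_unit_eq_inner_one[OF \<beta>])
    finally show "(\<integral>t. max 0 (h t \<bullet> \<beta>) * (t x \<bullet> \<beta>) \<partial>\<mu>) = W * (u x \<bullet> 1)"
      by (simp add: w_def)
  qed
qed

lemma integral_inner_eq_sum_signed_basis:
  fixes h g :: "('a \<Rightarrow> 'f) \<Rightarrow> 'f"
  assumes h: "h \<in> borel_measurable (restrict_space borel (dual_ball sc))"
    and g: "g \<in> borel_measurable (restrict_space borel (dual_ball sc))"
    and h_bounded: "\<And>t. t \<in> dual_ball sc \<Longrightarrow> norm (h t) \<le> B"
    and g_bounded: "\<And>t. t \<in> dual_ball sc \<Longrightarrow> norm (g t) \<le> C"
  shows "(\<integral>t. h t \<bullet> g t \<partial>\<mu>) =
    (\<Sum>k\<in>Basis \<times> UNIV. \<integral>t. max 0 (h t \<bullet> signed_basis k) * (g t \<bullet> signed_basis k) \<partial>\<mu>)"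
proof -
  have "(\<integral>t. h t \<bullet> g t \<partial>\<mu>) =
      (\<integral>t. (\<Sum>k\<in>Basis \<times> UNIV. max 0 (h t \<bullet> signed_basis k) * (g t \<bullet> signed_basis k)) \<partial>\<mu>)"
    by (intro Bochner_Integration.integral_cong refl inner_eq_sum_signed_basis)
  also have "\<dots> = (\<Sum>k\<in>Basis \<times> UNIV. \<integral>t. max 0 (h t \<bullet> signed_basis k) * (g t \<bullet> signed_basis k) \<partial>\<mu>)"
  proof (intro Bochner_Integration.integral_sum radon_prob_integrable_bounded[OF radon, where B="B * C"])
    fix k :: "'f \<times> bool"
    show "(\<lambda>t. max 0 (h t \<bullet> signed_basis k) * (g t \<bullet> signed_basis k))
        \<in> borel_measurable (restrict_space borel (dual_ball sc))"
      using h g by measurable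
  next
    fix k :: "'f \<times> bool" and t assume k: "k \<in> Basis \<times> UNIV" and t: "t \<in> dual_ball sc"
    have "\<bar>max 0 (h t \<bullet> signed_basis k)\<bar> \<le> B"
      using abs_inner_signed_basis_le[OF k, of "h t"] h_bounded[OF t] by linarith
    moreover have "\<bar>g t \<bullet> signed_basis k\<bar> \<le> C"
      using abs_inner_signed_basis_le[OF k, of "g t"] g_bounded[OF t] by linarith
    ultimately show "norm (max 0 (h t \<bullet> signed_basis k) * (g t \<bullet> signed_basis k)) \<le> B * C"
      unfolding real_norm_def abs_mult by (intro mult_mono) auto
  qed
  finally show ?thesis .
qed

lemma integral_inner_f_le:
  assumes h [measurable]: "h \<in> borel_measurable (restrict_space borel (dual_ball sc))"
    and h_bounded: "\<And>t. t \<in> dual_ball sc \<Longrightarrow> norm (h t) \<le> B" and "0 < \<eta>"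
  obtains x where "norm x \<le> sup_norm" and "(\<integral>t. h t \<bullet> f t \<partial>\<mu>) \<le> (\<integral>t. h t \<bullet> t x \<partial>\<mu>) + \<eta>"
proof -
  define I where "I = (Basis \<times> UNIV :: ('f \<times> bool) set)"
  define direction where "direction k W u \<longleftrightarrow> 0 \<le> W \<and> u \<in> dual_ball sc \<and>
      (\<integral>t. max 0 (h t \<bullet> signed_basis k) * (f t \<bullet> signed_basis k) \<partial>\<mu>) = W * (f u \<bullet> 1) \<and>
      (\<forall>x. (\<integral>t. max 0 (h t \<bullet> signed_basis k) * (t x \<bullet> signed_basis k) \<partial>\<mu>) = W * (u x \<bullet> 1))"
    for k W u
  have "\<forall>k\<in>I. \<exists>W u. direction k W u"
    unfolding direction_def I_def by (intro ballI weighted_direction[OF h h_bounded] norm_signed_basis)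
  then obtain W where "\<forall>k\<in>I. \<exists>u. direction k (W k) u"
    using bchoice[of I "\<lambda>k W. \<exists>u. direction k W u"] by blast
  then obtain u where "\<forall>k\<in>I. direction k (W k) (u k)"
    using bchoice[of I "\<lambda>k u. direction k (W k) u"] by blast
  then have Wu: "\<forall>k\<in>I. 0 \<le> W k \<and> u k \<in> dual_ball sc \<and>
      (\<integral>t. max 0 (h t \<bullet> signed_basis k) * (f t \<bullet> signed_basis k) \<partial>\<mu>) = W k * (f (u k) \<bullet> 1) \<and>
      (\<forall>x. (\<integral>t. max 0 (h t \<bullet> signed_basis k) * (t x \<bullet> signed_basis k) \<partial>\<mu>) = W k * (u k x \<bullet> 1))"
    unfolding direction_def .
  have W: "\<And>k. k \<in> I \<Longrightarrow> 0 \<le> W k" and u: "\<And>k. k \<in> I \<Longrightarrow> u k \<in> dual_ball sc"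
    using Wu by simp_all
  have lhs: "(\<integral>t. h t \<bullet> f t \<partial>\<mu>) = (\<Sum>k\<in>I. W k * (f (u k) \<bullet> 1))"
    using integral_inner_eq_sum_signed_basis[OF h f_measurable h_bounded norm_f_le_sup_norm] Wu
    unfolding I_def by (simp cong: sum.cong)
  have rhs: "(\<integral>t. h t \<bullet> t x \<partial>\<mu>) = (\<Sum>k\<in>I. W k * (u k x \<bullet> 1))" for x
    using integral_inner_eq_sum_signed_basis[OF h eval_measurable h_bounded dual_ballD(3)] Wu
    unfolding I_def by (simp cong: sum.cong)
  have "finite I" unfolding I_def by simp
  obtain x where "norm x \<le> sup_norm" and "(\<Sum>k\<in>I. W k * (f (u k) \<bullet> 1)) \<le> (\<Sum>k\<in>I. W k * (u k x \<bullet> 1)) + \<eta>"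
    using \<open>finite I\<close> W u \<open>0 < \<eta>\<close> by (rule weighted_sum_Re_f_le_eval)
  then show ?thesis unfolding lhs[symmetric] rhs[symmetric] by (rule that)
qed

definition sq_dist :: "'a \<Rightarrow> real" where
  "sq_dist x = (\<integral>t. (norm (f t - t x))\<^sup>2 \<partial>\<mu>)"

lemma sq_dist_nonneg: "0 \<le> sq_dist x"
  unfolding sq_dist_def by (simp add: integral_nonneg_AE)

lemma integrable_sq_dist: "integrable \<mu> (\<lambda>t. (norm (f t - t x))\<^sup>2)"
proof -
  have "integrable \<mu> (\<lambda>t. (f t - t x) \<bullet> (f t - t x))"
    by (rule integrable_inner) (use norm_f_minus_eval_le in \<open>auto intro: borel_measurable_diff\<close>)
  then show ?thesis by (simp add: power2_norm_eq_inner)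
qed

lemma sq_dist_segment:
  "sq_dist (x0 + s *\<^sub>R (x - x0)) = sq_dist x0 - 2 * s * (\<integral>t. (f t - t x0) \<bullet> (t x - t x0) \<partial>\<mu>)
     + s\<^sup>2 * (\<integral>t. (norm (t x - t x0))\<^sup>2 \<partial>\<mu>)"
proof -
  define h where "h t = f t - t x0" for t
  define g where "g t = t x - t x0" for t :: "'a \<Rightarrow> 'f"
  have h_meas: "h \<in> borel_measurable (restrict_space borel (dual_ball sc))"
    unfolding h_def by measurable
  have g_meas: "g \<in> borel_measurable (restrict_space borel (dual_ball sc))"
    unfolding g_def by measurable
  have h_bounded: "norm (h t) \<le> sup_norm + norm x0" if "t \<in> dual_ball sc" for t
    unfolding h_def using that by (rule norm_f_minus_eval_le)
  have g_bounded: "norm (g t) \<le> norm x + norm x0" if "t \<in> dual_ball sc" for t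
    unfolding g_def using that by (rule norm_eval_diff_le)
  have "integrable \<mu> (\<lambda>t. h t \<bullet> h t)" using h_meas h_meas h_bounded h_bounded by (rule integrable_inner)
  then have hh: "integrable \<mu> (\<lambda>t. (norm (h t))\<^sup>2)" by (simp add: power2_norm_eq_inner)
  have hg: "integrable \<mu> (\<lambda>t. h t \<bullet> g t)" using h_meas g_meas h_bounded g_bounded by (rule integrable_inner)
  have "integrable \<mu> (\<lambda>t. g t \<bullet> g t)" using g_meas g_meas g_bounded g_bounded by (rule integrable_inner)
  then have gg: "integrable \<mu> (\<lambda>t. (norm (g t))\<^sup>2)" by (simp add: power2_norm_eq_inner)
  have "(norm (f t - t (x0 + s *\<^sub>R (x - x0))))\<^sup>2 = (norm (h t))\<^sup>2 - 2 * s * (h t \<bullet> g t) + s\<^sup>2 * (norm (g t))\<^sup>2"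
    if "t \<in> dual_ball sc" for t
  proof -
    have "t (x0 + s *\<^sub>R (x - x0)) = t x0 + s *\<^sub>R g t"
      using that by (simp add: g_def dual_ballD(1) dual_ball_diff dual_ball_scaleR[OF scalar_structure]
          scaleR_conv_of_real)
    then have "f t - t (x0 + s *\<^sub>R (x - x0)) = h t - s *\<^sub>R g t" by (simp add: h_def)
    then show ?thesis using power2_norm_diff_scaleR[of "h t" s "g t"] by simp
  qed
  then have "sq_dist (x0 + s *\<^sub>R (x - x0)) =
      (\<integral>t. (norm (h t))\<^sup>2 - 2 * s * (h t \<bullet> g t) + s\<^sup>2 * (norm (g t))\<^sup>2 \<partial>\<mu>)"
    unfolding sq_dist_def by (intro Bochner_Integration.integral_cong) (auto simp: space_eq)
  also have "\<dots> = (\<integral>t. (norm (h t))\<^sup>2 \<partial>\<mu>) - 2 * s * (\<integral>t. h t \<bullet> g t \<partial>\<mu>)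
      + s\<^sup>2 * (\<integral>t. (norm (g t))\<^sup>2 \<partial>\<mu>)"
    using hh hg gg by simp
  finally show ?thesis unfolding sq_dist_def h_def g_def .
qed

lemma integral_power2_eval_diff_le:
  "(\<integral>t. (norm (t x - t x0))\<^sup>2 \<partial>\<mu>) \<le> (norm x + norm x0)\<^sup>2"
proof -
  interpret prob_space \<mu> using radon by (rule radon_probD)
  have "(\<integral>t. (norm (t x - t x0))\<^sup>2 \<partial>\<mu>) \<le> (\<integral>t. (norm x + norm x0)\<^sup>2 \<partial>\<mu>)"
  proof (rule integral_mono)
    have "integrable \<mu> (\<lambda>t. (t x - t x0) \<bullet> (t x - t x0))"
      by (rule integrable_inner) (use norm_eval_diff_le in auto)
    then show "integrable \<mu> (\<lambda>t. (norm (t x - t x0))\<^sup>2)" by (simp add: power2_norm_eq_inner)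
    show "integrable \<mu> (\<lambda>t. (norm x + norm x0)\<^sup>2)" by simp
    fix t assume "t \<in> space \<mu>"
    then show "(norm (t x - t x0))\<^sup>2 \<le> (norm x + norm x0)\<^sup>2"
      using norm_eval_diff_le[of t sc x x0] by (simp add: space_eq power_mono)
  qed
  then show ?thesis by (simp add: prob_space)
qed

lemma sq_dist_descent_direction:
  assumes x0: "norm x0 \<le> sup_norm" and "0 < \<eta>"
  obtains x where "norm x \<le> sup_norm"
    and "sq_dist x0 - \<eta> \<le> (\<integral>t. (f t - t x0) \<bullet> (t x - t x0) \<partial>\<mu>)"
proof -
  define h where "h t = f t - t x0" for t
  have h_meas [measurable]: "h \<in> borel_measurable (restrict_space borel (dual_ball sc))"
    unfolding h_def by measurable
  have h_bounded: "norm (h t) \<le> sup_norm + norm x0" if "t \<in> dual_ball sc" for t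
    unfolding h_def using that by (rule norm_f_minus_eval_le)
  obtain x where x: "norm x \<le> sup_norm" and gap: "(\<integral>t. h t \<bullet> f t \<partial>\<mu>) \<le> (\<integral>t. h t \<bullet> t x \<partial>\<mu>) + \<eta>"
    using h_meas h_bounded \<open>0 < \<eta>\<close> by (rule integral_inner_f_le)
  have "integrable \<mu> (\<lambda>t. h t \<bullet> f t)"
    using h_meas f_measurable h_bounded norm_f_le_sup_norm by (rule integrable_inner)
  moreover have "integrable \<mu> (\<lambda>t. h t \<bullet> t y)" for y
    using h_meas eval_measurable h_bounded dual_ballD(3) by (rule integrable_inner)
  ultimately have integrable: "integrable \<mu> (\<lambda>t. h t \<bullet> f t)" "integrable \<mu> (\<lambda>t. h t \<bullet> t y)" for y
    by blast+
  have "sq_dist x0 = (\<integral>t. h t \<bullet> f t - h t \<bullet> t x0 \<partial>\<mu>)"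
    unfolding sq_dist_def h_def by (simp add: power2_norm_eq_inner inner_diff_right)
  also have "\<dots> = (\<integral>t. h t \<bullet> f t \<partial>\<mu>) - (\<integral>t. h t \<bullet> t x0 \<partial>\<mu>)"
    using integrable by simp
  finally have "sq_dist x0 - \<eta> \<le> (\<integral>t. h t \<bullet> t x \<partial>\<mu>) - (\<integral>t. h t \<bullet> t x0 \<partial>\<mu>)"
    using gap by linarith
  also have "\<dots> = (\<integral>t. h t \<bullet> (t x - t x0) \<partial>\<mu>)"
    using integrable by (simp add: inner_diff_right)
  finally show ?thesis using x unfolding h_def by (intro that)
qed

lemma sq_dist_descent:
  assumes x0: "norm x0 \<le> sup_norm" and "0 < \<eta>"
  shows "\<exists>x. norm x \<le> sup_norm \<and> (\<forall>s\<ge>0.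
           sq_dist (x0 + s *\<^sub>R (x - x0)) \<le> (1 - 2 * s) * sq_dist x0 + 2 * s * \<eta> + 4 * sup_norm\<^sup>2 * s\<^sup>2)"
proof -
  obtain x where x: "norm x \<le> sup_norm"
    and rate: "sq_dist x0 - \<eta> \<le> (\<integral>t. (f t - t x0) \<bullet> (t x - t x0) \<partial>\<mu>)"
    using assms by (rule sq_dist_descent_direction)
  have "(norm x + norm x0)\<^sup>2 \<le> (2 * sup_norm)\<^sup>2"
    using x x0 by (intro power_mono) auto
  then have step: "(\<integral>t. (norm (t x - t x0))\<^sup>2 \<partial>\<mu>) \<le> 4 * sup_norm\<^sup>2"
    using integral_power2_eval_diff_le[of x x0] by (simp add: power_mult_distrib)
  have "sq_dist (x0 + s *\<^sub>R (x - x0)) \<le> (1 - 2 * s) * sq_dist x0 + 2 * s * \<eta> + 4 * sup_norm\<^sup>2 * s\<^sup>2"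
    if "0 \<le> s" for s
  proof -
    have "2 * s * (sq_dist x0 - \<eta>) \<le> 2 * s * (\<integral>t. (f t - t x0) \<bullet> (t x - t x0) \<partial>\<mu>)"
      using rate that by (intro mult_left_mono) auto
    moreover have "s\<^sup>2 * (\<integral>t. (norm (t x - t x0))\<^sup>2 \<partial>\<mu>) \<le> s\<^sup>2 * (4 * sup_norm\<^sup>2)"
      using step by (intro mult_left_mono) auto
    ultimately show ?thesis
      unfolding sq_dist_segment by (simp add: algebra_simps)
  qed
  with x show ?thesis by blast
qed

lemma sq_dist_arbitrarily_small:
  assumes "0 < \<epsilon>"
  shows "\<exists>x. norm x \<le> sup_norm \<and> sq_dist x < \<epsilon>"
proof -
  have "\<exists>x\<in>cball 0 sup_norm. sq_dist x < \<epsilon>"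
  proof (rule convex_descent_arbitrarily_small[where C="4 * sup_norm\<^sup>2"])
    show "cball 0 sup_norm \<noteq> {}" using sup_norm_nonneg by simp
    fix x0 :: 'a and \<eta> :: real assume "x0 \<in> cball 0 sup_norm" "0 < \<eta>"
    then show "\<exists>x\<in>cball 0 sup_norm. \<forall>s. 0 \<le> s \<longrightarrow> s \<le> 1 \<longrightarrow>
        sq_dist (x0 + s *\<^sub>R (x - x0)) \<le> (1 - 2 * s) * sq_dist x0 + 2 * s * \<eta> + 4 * sup_norm\<^sup>2 * s\<^sup>2"
      using sq_dist_descent[of x0 \<eta>] by auto
  qed (use \<open>0 < \<epsilon>\<close> in auto)
  then show ?thesis by auto
qed

end

theorem lemma2p8:
  fixes sc :: "'f::{real_normed_field,euclidean_space} \<Rightarrow> 'a::banach \<Rightarrow> 'a"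
    and f :: "('a \<Rightarrow> 'f) \<Rightarrow> 'f"
    and \<mu> :: "('a \<Rightarrow> 'f) measure"
  assumes "scalar_structure sc"
    and "f \<in> borel_measurable (restrict_space borel (dual_ball sc))"
    and "S_homogeneous (dual_ball sc) f"
    and "strongly_affine (dual_ball sc) f"
    and "radon_prob (dual_ball sc) \<mu>"
  shows "\<exists>xs :: nat \<Rightarrow> 'a.
           (\<forall>n. norm (xs n) \<le> (SUP t\<in>dual_ball sc. norm (f t))) \<and>
           (AE t in \<mu>. (\<lambda>n. t (xs n)) \<longlonglongrightarrow> f t)"
proof -
  (* Borel measurability of f is part of strong affinity. *)
  interpret homogeneous_strongly_affine_radon sc f \<mu>
    using assms(1,3-5) by unfold_locales
  have "\<forall>n. \<exists>x. norm x \<le> sup_norm \<and> sq_dist x < (1 / 2) ^ n"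
    using sq_dist_arbitrarily_small by simp
  then obtain xs where xs: "\<And>n. norm (xs n) \<le> sup_norm" "\<And>n. sq_dist (xs n) < (1 / 2) ^ n"
    by metis
  have "summable (\<lambda>n. sq_dist (xs n))"
    by (rule summable_comparison_test'[where g="\<lambda>n. (1 / 2) ^ n"])
       (use xs(2) sq_dist_nonneg in \<open>auto intro: less_imp_le\<close>)
  then have "AE t in \<mu>. (\<lambda>n. (norm (f t - t (xs n)))\<^sup>2) \<longlonglongrightarrow> 0"
    by (intro AE_tendsto_zero_if_summable_integrals integrable_sq_dist) (simp_all add: sq_dist_def)
  then have "AE t in \<mu>. (\<lambda>n. t (xs n)) \<longlonglongrightarrow> f t"
    by eventually_elim (rule tendsto_if_power2_norm_diff_tendsto_0)
  with xs(1) show ?thesis unfolding sup_norm_def by blast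
qed

end
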